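(* Let $p\ge 2$ and $n\ge 1$ be integers, let $u\in C^2([0,1])$ with $m_2\le u''(x)\le M_2$ for all $x\in[0,1]$ (real constants $m_2\le M_2$), let $0=x_0<x_1<\dots<x_{N+1}=1$ be a partition with $h_i=x_{i+1}-x_i$ and $h=\max_{0\le i\le N}h_i$, and let $u_I$ be the $P_1$-interpolant of $u$ on this partition. Then $$\|u-u_I\|_{1,p}^p\le\frac{(n+2)^{p-1}}{p+1}\left(\frac{1}{2^{p-1}n^p}+\frac{2S_p^*(n)}{n^{2p+1}}\right)\left(h^p+\frac{h^{2p}}{p}\right)\|u''\|_\infty^p+\frac{1}{3n}\left(\frac38\right)^p\left(h^p+\frac{h^{2p}}{p}\right)(M_2-m_2)^p,$$ where $S_p^*(n)=\sum_{k=1}^{n-1}k^{p+1}$ for $n\ge2$ and $S_p^*(1)=0$.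
   Context: $u_I$ is the continuous function on $[0,1]$ that is affine on each $[x_i,x_{i+1}]$ and satisfies $u_I(x_i)=u(x_i)$ for $i=0,\dots,N+1$. For $v\in W^{1,p}(]0,1[)$, $\|v\|_{0,p}=\left(\int_0^1|v(x)|^p\,dx\right)^{1/p}$ and $\|v\|_{1,p}=\left(\|v\|_{0,p}^p+\|v'\|_{0,p}^p\right)^{1/p}$, with $v'$ the weak derivative. $\|u''\|_\infty=\sup_{x\in[0,1]}|u''(x)|$. *)

theory Defs
  imports "HOL-Analysis.Analysis"
begin

definition test_fun_01 :: "(real \<Rightarrow> real) \<Rightarrow> bool" where
  "test_fun_01 \<phi> \<longleftrightarrow>
     (\<forall>k t. ((deriv ^^ k) \<phi>) differentiable (at t)) \<and>
     (\<exists>a b. 0 < a \<and> b < 1 \<and> (\<forall>t. t \<notin> {a..b} \<longrightarrow> \<phi> t = 0))"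

definition is_weak_deriv_01 :: "(real \<Rightarrow> real) \<Rightarrow> (real \<Rightarrow> real) \<Rightarrow> bool" where
  "is_weak_deriv_01 v g \<longleftrightarrow>
     set_integrable lborel {0<..<1} v \<and> set_integrable lborel {0<..<1} g \<and>
     (\<forall>\<phi>. test_fun_01 \<phi> \<longrightarrow>
        (LINT t:{0<..<1}|lborel. v t * deriv \<phi> t) = - (LINT t:{0<..<1}|lborel. g t * \<phi> t))"

definition weak_deriv_01 :: "(real \<Rightarrow> real) \<Rightarrow> (real \<Rightarrow> real)" where
  "weak_deriv_01 v = (SOME g. is_weak_deriv_01 v g)"

definition norm_0p :: "real \<Rightarrow> (real \<Rightarrow> real) \<Rightarrow> real" where
  "norm_0p p v = (LINT t:{0<..<1}|lborel. \<bar>v t\<bar> powr p) powr (1 / p)"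

definition norm_1p :: "real \<Rightarrow> (real \<Rightarrow> real) \<Rightarrow> real" where
  "norm_1p p v = (norm_0p p v powr p + norm_0p p (weak_deriv_01 v) powr p) powr (1 / p)"

definition S_star :: "nat \<Rightarrow> nat \<Rightarrow> real" where
  "S_star p n = (\<Sum>k=1..<n. real k ^ (p + 1))"

end

theory Submission
  imports Defs "HOL-Computational_Algebra.Polynomial"
begin

text \<open>
  On a cell \<open>[a, b]\<close> the Taylor expansions of \<open>u\<close> around \<open>t\<close>, evaluated at \<open>a\<close> and \<open>b\<close>, give
  \<open>|u - uI| \<le> \<parallel>u''\<parallel>\<^sub>\<infinity> h\<^sup>2 / 8\<close> and
  \<open>|u' - uI'| \<le> \<parallel>u''\<parallel>\<^sub>\<infinity> max (t - a) (b - t) / 2\<close>; integrating the \<open>p\<close>-th powers yields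
  \<open>\<parallel>u - uI\<parallel>\<^sub>1\<^sub>,\<^sub>p\<^sup>p \<le> (\<parallel>u''\<parallel>\<^sub>\<infinity> h\<^sup>2 / 8)\<^sup>p + 2 \<parallel>u''\<parallel>\<^sub>\<infinity>\<^sup>p (h / 2)\<^sup>p / (p + 1)\<close>.
  Here \<open>u' - uI'\<close> is a weak derivative of \<open>u - uI\<close> (integration by parts on every cell), and
  weak derivatives are unique almost everywhere (tested against smooth plateau functions that
  approximate indicators of intervals), so it may be used in the norm. The stated bound follows
  because its constant is at least \<open>1 / ((p + 1) 2\<^sup>p\<^sup>-\<^sup>1)\<close>, by a lower bound for the power sum
  \<open>S\<^sub>p\<^sup>*(n)\<close>, while the \<open>(M\<^sub>2 - m\<^sub>2)\<close> term is nonnegative.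
\<close>

section \<open>Smooth functions\<close>

definition smooth :: "(real \<Rightarrow> real) \<Rightarrow> bool" where
  "smooth f \<longleftrightarrow> (\<forall>k t. (deriv ^^ k) f differentiable (at t))"

lemma smooth_if_deriv_closed:
  assumes closed: "\<And>f. f \<in> C \<Longrightarrow> \<exists>f'\<in>C. \<forall>t. (f has_real_derivative f' t) (at t)"
    and "f \<in> C"
  shows "smooth f"
proof -
  have deriv_in: "deriv f \<in> C \<and> (\<forall>t. f differentiable (at t))" if fC: "f \<in> C" for f
  proof -
    obtain f' where f': "f' \<in> C" "\<forall>t. (f has_real_derivative f' t) (at t)"
      using closed[OF fC] by blast
    then have "deriv f = f'" by (auto intro!: ext DERIV_imp_deriv)
    with f' show ?thesis using real_differentiable_def by blast
  qed
  have "\<forall>f\<in>C. (deriv ^^ k) f \<in> C" for k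
  proof (induction k)
    case (Suc k)
    then show ?case using deriv_in by (simp add: funpow_Suc_right del: funpow.simps)
  qed simp
  then show ?thesis using deriv_in assms(2) unfolding smooth_def by blast
qed

lemma smooth_has_real_derivative: "smooth f \<Longrightarrow> (f has_real_derivative deriv f t) (at t)"
  unfolding smooth_def by (metis DERIV_deriv_iff_real_differentiable funpow_0)

lemma smooth_deriv: "smooth f \<Longrightarrow> smooth (deriv f)"
  unfolding smooth_def by (metis comp_apply funpow_Suc_right)

lemma smooth_antiderivative:
  assumes "\<And>t. (f has_real_derivative g t) (at t)" "smooth g"
  shows "smooth f"
proof (rule smooth_if_deriv_closed[where C="insert f (Collect smooth)"])
  fix h assume "h \<in> insert f (Collect smooth)"
  then show "\<exists>h'\<in>insert f (Collect smooth). \<forall>t. (h has_real_derivative h' t) (at t)"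
    using assms smooth_has_real_derivative smooth_deriv by blast
qed simp

lemma smooth_continuous_on: "smooth f \<Longrightarrow> continuous_on S f"
  by (meson DERIV_isCont continuous_at_imp_continuous_on smooth_has_real_derivative)

lemma smooth_affine_comp:
  assumes "smooth f" shows "smooth (\<lambda>t. c * f (a * t + b))"
proof -
  define C where "C = {g. \<exists>c a b f. smooth f \<and> g = (\<lambda>t. c * f (a * t + b))}"
  have "\<exists>g'\<in>C. \<forall>t. (g has_real_derivative g' t) (at t)" if "g \<in> C" for g
  proof -
    from that obtain c a b f where f: "smooth f" and g: "g = (\<lambda>t. c * f (a * t + b))"
      unfolding C_def by blast
    have "(g has_real_derivative (c * a) * deriv f (a * t + b)) (at t)" for t
    proof -
      have "((\<lambda>t. f (a * t + b)) has_real_derivative deriv f (a * t + b) * a) (at t)"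
        by (rule DERIV_chain2[OF smooth_has_real_derivative[OF f]]) (auto intro!: derivative_eq_intros)
      from DERIV_cmult[OF this, of c] show ?thesis unfolding g by (simp add: mult_ac)
    qed
    moreover have "(\<lambda>t. (c * a) * deriv f (a * t + b)) \<in> C"
      unfolding C_def using smooth_deriv[OF f]
      by (intro CollectI exI[of _ "c * a"] exI[of _ a] exI[of _ b] exI[of _ "deriv f"]) simp
    ultimately show ?thesis by (intro bexI[where x="\<lambda>t. (c * a) * deriv f (a * t + b)"]) auto
  qed
  moreover have "(\<lambda>t. c * f (a * t + b)) \<in> C"
    unfolding C_def using assms by blast
  ultimately show ?thesis by (rule smooth_if_deriv_closed)
qed

lemma smooth_add:
  assumes "smooth f" "smooth g" shows "smooth (\<lambda>t. f t + g t)"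
proof -
  define C where "C = {h. \<exists>f g. smooth f \<and> smooth g \<and> h = (\<lambda>t. f t + g t)}"
  have "\<exists>h'\<in>C. \<forall>t. (h has_real_derivative h' t) (at t)" if "h \<in> C" for h
  proof -
    from that obtain f g where fg: "smooth f" "smooth g" and h: "h = (\<lambda>t. f t + g t)"
      unfolding C_def by blast
    have "(h has_real_derivative deriv f t + deriv g t) (at t)" for t
      unfolding h using fg by (intro DERIV_add smooth_has_real_derivative)
    moreover have "(\<lambda>t. deriv f t + deriv g t) \<in> C"
      unfolding C_def using fg smooth_deriv by blast
    ultimately show ?thesis by (intro bexI[where x="\<lambda>t. deriv f t + deriv g t"]) auto
  qed
  moreover have "(\<lambda>t. f t + g t) \<in> C"
    unfolding C_def using assms by blast
  ultimately show ?thesis by (rule smooth_if_deriv_closed)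
qed

lemma has_real_derivative_sum_list_mult:
  assumes "\<forall>(f, g)\<in>set L. smooth f \<and> smooth g"
  shows "((\<lambda>t. \<Sum>(f, g)\<leftarrow>L. f t * g t) has_real_derivative
    (\<Sum>(f, g)\<leftarrow>map (\<lambda>(f, g). (deriv f, g)) L @ map (\<lambda>(f, g). (f, deriv g)) L. f t * g t)) (at t)"
  using assms
proof (induction L)
  case (Cons fg L)
  obtain f g where fg: "fg = (f, g)" by fastforce
  with Cons.prems have "smooth f" "smooth g" by auto
  from DERIV_add[OF DERIV_mult[OF this[THEN smooth_has_real_derivative]] Cons.IH] Cons.prems fg
  show ?case by (simp add: add_ac mult.commute)
qed simp

text \<open>Products are handled through finite sums of products, a class closed under
  differentiation.\<close>

lemma smooth_mult:
  assumes "smooth f" "smooth g" shows "smooth (\<lambda>t. f t * g t)"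
proof -
  define C where "C = {h. \<exists>L. (\<forall>(f, g)\<in>set L. smooth f \<and> smooth g) \<and>
    h = (\<lambda>t. \<Sum>(f, g)\<leftarrow>L. f t * g t)}"
  have "\<exists>h'\<in>C. \<forall>t. (h has_real_derivative h' t) (at t)" if "h \<in> C" for h
  proof -
    from that obtain L where L: "\<forall>(f, g)\<in>set L. smooth f \<and> smooth g"
      and h: "h = (\<lambda>t. \<Sum>(f, g)\<leftarrow>L. f t * g t)" unfolding C_def by blast
    define L' where "L' = map (\<lambda>(f, g). (deriv f, g)) L @ map (\<lambda>(f, g). (f, deriv g)) L"
    have "\<forall>(f, g)\<in>set L'. smooth f \<and> smooth g"
      using L smooth_deriv unfolding L'_def by auto
    then have "(\<lambda>t. \<Sum>(f, g)\<leftarrow>L'. f t * g t) \<in> C"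
      unfolding C_def by (intro CollectI exI[of _ L'] conjI refl)
    moreover have "\<forall>t. (h has_real_derivative (\<Sum>(f, g)\<leftarrow>L'. f t * g t)) (at t)"
      unfolding h L'_def using has_real_derivative_sum_list_mult[OF L] by blast
    ultimately show ?thesis by auto
  qed
  moreover have "(\<lambda>t. f t * g t) \<in> C"
    unfolding C_def using assms by (intro CollectI exI[of _ "[(f, g)]"]) auto
  ultimately show ?thesis by (rule smooth_if_deriv_closed)
qed

lemma tendsto_poly_div_exp_at_top: "((\<lambda>x. poly P x / exp x) \<longlongrightarrow> (0::real)) at_top"
proof -
  have "((\<lambda>x. \<Sum>i\<le>degree P. coeff P i * (x ^ i / exp x)) \<longlongrightarrow> (\<Sum>i\<le>degree P. coeff P i * 0)) at_top"
    by (intro tendsto_sum tendsto_mult tendsto_const tendsto_power_div_exp_0)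
  then show ?thesis by (simp add: poly_altdef sum_divide_distrib)
qed

definition poly_exp_neg_inverse :: "real poly \<Rightarrow> real \<Rightarrow> real" where
  "poly_exp_neg_inverse P x = (if x > 0 then poly P (inverse x) * exp (- inverse x) else 0)"

lemma has_real_derivative_poly_exp_neg_inverse_0:
  "(poly_exp_neg_inverse P has_real_derivative 0) (at 0)"
proof -
  have "((\<lambda>y. poly_exp_neg_inverse P y / y) \<longlongrightarrow> 0) (at_left 0)"
  proof (rule Lim_transform_eventually[of "\<lambda>_. 0"])
    have "\<forall>\<^sub>F y in at_left (0::real). y \<in> {-1<..<0}" by (rule eventually_at_left_real) simp
    then show "\<forall>\<^sub>F y in at_left 0. 0 = poly_exp_neg_inverse P y / y"
      by eventually_elim (auto simp: poly_exp_neg_inverse_def)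
  qed simp
  moreover have "((\<lambda>y. poly_exp_neg_inverse P y / y) \<longlongrightarrow> 0) (at_right 0)"
    unfolding filterlim_at_right_to_top
  proof (rule Lim_transform_eventually[OF tendsto_poly_div_exp_at_top[of "pCons 0 P"]])
    show "\<forall>\<^sub>F x in at_top. poly (pCons 0 P) x / exp x = poly_exp_neg_inverse P (inverse x) / inverse x"
      using eventually_gt_at_top[of 0]
      by eventually_elim (auto simp: poly_exp_neg_inverse_def exp_minus field_simps)
  qed
  ultimately show ?thesis
    by (simp add: DERIV_def poly_exp_neg_inverse_def filterlim_at_split)
qed

text \<open>The derivative stays of the same shape, which is what makes these functions smooth.\<close>

lemma has_real_derivative_poly_exp_neg_inverse:
  "(poly_exp_neg_inverse P has_real_derivative
     poly_exp_neg_inverse ([:0, 0, 1:] * (P - pderiv P)) x) (at x)"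
proof -
  consider "x > 0" | "x < 0" | "x = 0" by linarith
  then show ?thesis
  proof cases
    case 1
    have "((\<lambda>x. poly P (inverse x) * exp (- inverse x)) has_real_derivative
        poly (pderiv P) (inverse x) * (- (inverse x ^ 2)) * exp (- inverse x) +
        poly P (inverse x) * (exp (- inverse x) * (inverse x ^ 2))) (at x)"
      using 1 by (auto intro!: derivative_eq_intros DERIV_chain2[OF poly_DERIV]
          simp: power2_eq_square field_simps)
    also have "poly (pderiv P) (inverse x) * (- (inverse x ^ 2)) * exp (- inverse x) +
        poly P (inverse x) * (exp (- inverse x) * (inverse x ^ 2))
        = poly_exp_neg_inverse ([:0, 0, 1:] * (P - pderiv P)) x"
      using 1 by (simp add: poly_exp_neg_inverse_def algebra_simps power2_eq_square)
    finally show ?thesis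
      by (rule has_field_derivative_transform_within_open[where S="{0<..}"])
        (use 1 in \<open>auto simp: poly_exp_neg_inverse_def algebra_simps power2_eq_square\<close>)
  next
    case 2
    have "((\<lambda>_. 0) has_real_derivative poly_exp_neg_inverse ([:0, 0, 1:] * (P - pderiv P)) x) (at x)"
      using 2 by (simp add: poly_exp_neg_inverse_def)
    then show ?thesis
      by (rule has_field_derivative_transform_within_open[where S="{..<0}"])
        (use 2 in \<open>auto simp: poly_exp_neg_inverse_def\<close>)
  next
    case 3
    then show ?thesis
      using has_real_derivative_poly_exp_neg_inverse_0 by (simp add: poly_exp_neg_inverse_def)
  qed
qed

lemma smooth_poly_exp_neg_inverse: "smooth (poly_exp_neg_inverse P)"
  by (rule smooth_if_deriv_closed[where C="range poly_exp_neg_inverse"])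
    (auto intro: has_real_derivative_poly_exp_neg_inverse)

definition exp_neg_inverse :: "real \<Rightarrow> real" where
  "exp_neg_inverse = poly_exp_neg_inverse 1"

lemma smooth_exp_neg_inverse: "smooth exp_neg_inverse"
  by (simp add: exp_neg_inverse_def smooth_poly_exp_neg_inverse)

lemma exp_neg_inverse_pos: "x > 0 \<Longrightarrow> exp_neg_inverse x > 0"
  and exp_neg_inverse_eq_0: "x \<le> 0 \<Longrightarrow> exp_neg_inverse x = 0"
  and exp_neg_inverse_nonneg: "exp_neg_inverse x \<ge> 0"
  by (auto simp: exp_neg_inverse_def poly_exp_neg_inverse_def)

definition bump :: "real \<Rightarrow> real \<Rightarrow> real" where
  "bump e t = exp_neg_inverse t * exp_neg_inverse (e - t)"

lemma bump_eq_0: "s \<le> 0 \<or> e \<le> s \<Longrightarrow> bump e s = 0"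
  and bump_pos: "0 < s \<Longrightarrow> s < e \<Longrightarrow> bump e s > 0"
  and bump_nonneg: "bump e s \<ge> 0"
  by (auto simp: bump_def exp_neg_inverse_eq_0 exp_neg_inverse_pos exp_neg_inverse_nonneg)

lemma smooth_bump: "smooth (bump e)"
proof -
  have "smooth (\<lambda>t. 1 * exp_neg_inverse ((-1) * t + e))"
    by (rule smooth_affine_comp[OF smooth_exp_neg_inverse])
  from smooth_mult[OF smooth_exp_neg_inverse this] show ?thesis
    unfolding bump_def by simp
qed

lemma integrable_bump: "bump e integrable_on {a..b}"
  by (rule integrable_continuous_real[OF smooth_continuous_on[OF smooth_bump]])

lemma integral_bump_pos:
  assumes "e > 0" shows "integral {0..e} (bump e) > 0"
proof -
  have "integral {0..e} (\<lambda>_. 0::real) < integral {0..e} (bump e)"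
    by (rule integral_less_real) (use assms in \<open>auto intro: smooth_continuous_on smooth_bump bump_pos\<close>)
  then show ?thesis by simp
qed

definition smooth_step :: "real \<Rightarrow> real \<Rightarrow> real" where
  "smooth_step e s = integral {-1..s} (bump e) / integral {0..e} (bump e)"

lemma smooth_step_eq_0:
  assumes "s \<le> 0" shows "smooth_step e s = 0"
proof -
  have "integral {-1..s} (bump e) = integral {-1..s} (\<lambda>_. 0::real)"
    by (rule integral_cong) (use assms in \<open>auto intro: bump_eq_0\<close>)
  then show ?thesis by (simp add: smooth_step_def)
qed

lemma integral_bump_from_minus_1:
  assumes "e > 0" "e \<le> s" shows "integral {-1..s} (bump e) = integral {0..e} (bump e)"
proof -
  have "integral {-1..s} (bump e) = integral {-1..0} (bump e) + integral {0..e} (bump e) + integral {e..s} (bump e)"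
    using assms by (simp add: Henstock_Kurzweil_Integration.integral_combine integrable_bump)
  moreover have "integral {-1..0} (bump e) = 0" "integral {e..s} (bump e) = 0"
    by (auto intro!: integral_unique has_integral_is_0 bump_eq_0)
  ultimately show ?thesis by simp
qed

lemma smooth_step_eq_1: "e > 0 \<Longrightarrow> e \<le> s \<Longrightarrow> smooth_step e s = 1"
  using integral_bump_pos[of e] by (simp add: smooth_step_def integral_bump_from_minus_1)

lemma smooth_step_nonneg: "e > 0 \<Longrightarrow> smooth_step e s \<ge> 0"
  unfolding smooth_step_def using integral_bump_pos[of e]
  by (intro divide_nonneg_pos integral_nonneg integrable_bump) (auto intro: bump_nonneg)

lemma smooth_step_le_1:
  assumes "e > 0" shows "smooth_step e s \<le> 1"
proof (cases "-1 \<le> s \<and> s \<le> e")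
  case True
  then have "integral {-1..s} (bump e) \<le> integral {-1..e} (bump e)"
    by (intro integral_subset_le integrable_bump) (auto intro: bump_nonneg)
  then show ?thesis
    using assms integral_bump_pos[OF assms] by (simp add: smooth_step_def integral_bump_from_minus_1)
next
  case False
  then show ?thesis
    using smooth_step_eq_1[OF assms, of s] by (cases "s < -1") (auto simp: smooth_step_def)
qed

lemma has_real_derivative_smooth_step:
  assumes "e > 0"
  shows "(smooth_step e has_real_derivative bump e s / integral {0..e} (bump e)) (at s)"
proof -
  consider "s < 0" | "-1 < s \<and> s < e + 1" | "s > e" by linarith
  then show ?thesis
  proof cases
    case 1
    have "((\<lambda>_. 0) has_real_derivative bump e s / integral {0..e} (bump e)) (at s)"
      using 1 by (simp add: bump_eq_0)
    then show ?thesis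
      by (rule has_field_derivative_transform_within_open[where S="{..<0}"])
        (use 1 smooth_step_eq_0 in auto)
  next
    case 2
    have "((\<lambda>s. integral {-1..s} (bump e)) has_real_derivative bump e s) (at s within {-1..e+1})"
      by (rule integral_has_real_derivative[OF smooth_continuous_on[OF smooth_bump]]) (use 2 in auto)
    then have "((\<lambda>s. integral {-1..s} (bump e)) has_real_derivative bump e s) (at s)"
      using 2 by (subst (asm) at_within_interior) auto
    then show ?thesis
      unfolding smooth_step_def[abs_def] using integral_bump_pos[OF assms]
      by (intro derivative_eq_intros) auto
  next
    case 3
    have "((\<lambda>_. 1) has_real_derivative bump e s / integral {0..e} (bump e)) (at s)"
      using 3 by (simp add: bump_eq_0)
    then show ?thesis
      by (rule has_field_derivative_transform_within_open[where S="{e<..}"])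
        (use 3 smooth_step_eq_1 assms in auto)
  qed
qed

lemma smooth_smooth_step:
  assumes "e > 0" shows "smooth (smooth_step e)"
proof (rule smooth_antiderivative[OF has_real_derivative_smooth_step[OF assms]])
  have "smooth (\<lambda>t. (1 / integral {0..e} (bump e)) * bump e (1 * t + 0))"
    by (rule smooth_affine_comp[OF smooth_bump])
  then show "smooth (\<lambda>t. bump e t / integral {0..e} (bump e))" by simp
qed

definition plateau :: "real \<Rightarrow> real \<Rightarrow> real \<Rightarrow> real \<Rightarrow> real" where
  "plateau c d e t = smooth_step e (t - c) - smooth_step e (t - d)"

context
  fixes c d e :: real
  assumes e: "e > 0" and cd: "c + e \<le> d"
begin

lemma plateau_eq_0: "t \<le> c \<or> d + e \<le> t \<Longrightarrow> plateau c d e t = 0"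
  using e cd by (auto simp: plateau_def smooth_step_eq_0 smooth_step_eq_1)

lemma plateau_eq_1: "c + e \<le> t \<Longrightarrow> t \<le> d \<Longrightarrow> plateau c d e t = 1"
  using e by (simp add: plateau_def smooth_step_eq_0 smooth_step_eq_1)

lemma plateau_bounds: "0 \<le> plateau c d e t \<and> plateau c d e t \<le> 1"
  using e cd smooth_step_nonneg[OF e] smooth_step_le_1[OF e]
  by (cases "t \<le> d") (auto simp: plateau_def smooth_step_eq_0 smooth_step_eq_1)

lemma smooth_plateau: "smooth (plateau c d e)"
proof -
  have "smooth (\<lambda>t. 1 * smooth_step e (1 * t + (-c)) + (-1) * smooth_step e (1 * t + (-d)))"
    by (intro smooth_add smooth_affine_comp smooth_smooth_step e)
  then show ?thesis unfolding plateau_def by simp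
qed

lemma test_fun_01_plateau:
  assumes "0 < c" "d + e < 1" shows "test_fun_01 (plateau c d e)"
  unfolding test_fun_01_def
proof
  show "\<forall>k t. (deriv ^^ k) (plateau c d e) differentiable at t"
    using smooth_plateau unfolding smooth_def by blast
  show "\<exists>a b. 0 < a \<and> b < 1 \<and> (\<forall>t. t \<notin> {a..b} \<longrightarrow> plateau c d e t = 0)"
    using plateau_eq_0 assms by (intro exI[of _ c] exI[of _ "d + e"]) auto
qed

end

lemma smooth_if_test_fun_01: "test_fun_01 \<phi> \<Longrightarrow> smooth \<phi>"
  by (simp add: test_fun_01_def smooth_def)

section \<open>Uniqueness of weak derivatives\<close>

lemma emeasure_density_greaterThan:
  fixes F :: "real \<Rightarrow> real"
  assumes "F \<in> borel_measurable lborel" "\<And>t. F t \<ge> 0"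
    and "integrable lborel (\<lambda>t. indicator {a<..} t * F t)"
  shows "emeasure (density lborel (\<lambda>t. ennreal (F t))) {a<..}
    = ennreal (\<integral>t. indicator {a<..} t * F t \<partial>lborel)"
proof -
  have "emeasure (density lborel (\<lambda>t. ennreal (F t))) {a<..}
      = (\<integral>\<^sup>+ t. ennreal (F t) * indicator {a<..} t \<partial>lborel)"
    using assms(1) by (intro emeasure_density) auto
  also have "\<dots> = (\<integral>\<^sup>+ t. ennreal (indicator {a<..} t * F t) \<partial>lborel)"
    by (intro nn_integral_cong) (auto simp: indicator_def)
  also have "\<dots> = ennreal (\<integral>t. indicator {a<..} t * F t \<partial>lborel)"
    using assms by (intro nn_integral_eq_integral) auto
  finally show ?thesis .
qed

text \<open>The positive and negative parts of \<open>w\<close>, as densities, give measures that agree on all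
  half-lines and hence coincide.\<close>

lemma AE_eq_0_if_integral_Ioi_eq_0:
  fixes w :: "real \<Rightarrow> real"
  assumes w: "integrable lborel w"
    and Ioi: "\<And>a. (\<integral>t. indicator {a<..} t * w t \<partial>lborel) = 0"
  shows "AE t in lborel. w t = 0"
proof -
  define P where "P t = max 0 (w t)" for t
  define N where "N t = max 0 (- w t)" for t
  have [measurable]: "w \<in> borel_measurable lborel" using w by (rule borel_measurable_integrable)
  have [measurable]: "P \<in> borel_measurable lborel" "N \<in> borel_measurable lborel"
    unfolding P_def N_def by measurable
  have "integrable lborel P" "integrable lborel N"
    unfolding P_def N_def using w by (auto intro: integrable_max)
  then have PI: "integrable lborel (\<lambda>t. indicator {a<..} t * P t)"
    and NI: "integrable lborel (\<lambda>t. indicator {a<..} t * N t)" for a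
    using integrable_real_mult_indicator[of "{a<..}" lborel] by (auto simp: mult.commute)
  have PN: "(\<integral>t. indicator {a<..} t * P t \<partial>lborel) = (\<integral>t. indicator {a<..} t * N t \<partial>lborel)" for a
  proof -
    have "(\<integral>t. indicator {a<..} t * P t \<partial>lborel) - (\<integral>t. indicator {a<..} t * N t \<partial>lborel)
        = (\<integral>t. indicator {a<..} t * w t \<partial>lborel)"
      by (subst Bochner_Integration.integral_diff[OF PI NI, symmetric])
        (auto intro!: Bochner_Integration.integral_cong simp: P_def N_def max_def algebra_simps)
    then show ?thesis using Ioi[of a] by simp
  qed
  have "emeasure (density lborel (\<lambda>t. ennreal (P t))) {a<..}
      = ennreal (\<integral>t. indicator {a<..} t * P t \<partial>lborel)"
    and "emeasure (density lborel (\<lambda>t. ennreal (N t))) {a<..}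
      = ennreal (\<integral>t. indicator {a<..} t * N t \<partial>lborel)" for a
    by (intro emeasure_density_greaterThan PI NI; simp add: P_def N_def)+
  then have "density lborel (\<lambda>t. ennreal (P t)) = density lborel (\<lambda>t. ennreal (N t))"
    by (intro measure_eqI_lessThan) (simp_all add: PN)
  then have "AE t in lborel. ennreal (P t) = ennreal (N t)"
    by (intro sigma_finite_measure.density_unique[OF sigma_finite_lborel]) auto
  then show ?thesis
    by eventually_elim (auto simp: P_def N_def max_def split: if_splits)
qed

lemma set_integrable_mult_continuous:
  fixes f \<phi> :: "real \<Rightarrow> real"
  assumes f: "set_integrable lborel {0<..<1} f" and \<phi>: "continuous_on {0..1} \<phi>"
  shows "set_integrable lborel {0<..<1} (\<lambda>t. f t * \<phi> t)"
proof -
  obtain B where B: "\<forall>t\<in>{0..1}. \<bar>\<phi> t\<bar> \<le> B"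
    using compact_imp_bounded[OF compact_continuous_image[OF \<phi> compact_Icc]] by (auto simp: bounded_iff)
  have fi: "integrable lborel (\<lambda>t. indicator {0<..<1} t * f t)"
    using f by (simp add: set_integrable_def)
  have "continuous_on {0<..<1} \<phi>" by (rule continuous_on_subset[OF \<phi>]) auto
  then have "(\<lambda>t. indicator {0<..<1} t *\<^sub>R \<phi> t) \<in> borel_measurable borel"
    by (intro borel_measurable_continuous_on_indicator) auto
  then have "(\<lambda>t. (indicator {0<..<1} t * f t) * (indicator {0<..<1} t * \<phi> t)) \<in> borel_measurable lborel"
    using borel_measurable_integrable[OF fi] by simp
  moreover have "(\<lambda>t. (indicator {0<..<1} t * f t) * (indicator {0<..<1} t * \<phi> t))
      = (\<lambda>t. indicator {0<..<1} t * (f t * \<phi> t))"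
    by (auto simp: indicator_def)
  moreover have "norm (indicator {0<..<1} t * (f t * \<phi> t)) \<le> norm (B * (indicator {0<..<1} t * f t))"
    for t :: real
  proof -
    have "\<bar>\<phi> t\<bar> \<le> \<bar>B\<bar>" if "t \<in> {0<..<1}"
      using B that abs_ge_self[of B] by (auto dest!: bspec[of _ _ t])
    then have "\<bar>f t\<bar> * \<bar>\<phi> t\<bar> \<le> \<bar>f t\<bar> * \<bar>B\<bar>" if "t \<in> {0<..<1}"
      using that by (simp add: mult_left_mono)
    then show ?thesis by (auto simp: indicator_def abs_mult mult.commute)
  qed
  ultimately have "integrable lborel (\<lambda>t. indicator {0<..<1} t * (f t * \<phi> t))"
    by (intro Bochner_Integration.integrable_bound[OF integrable_mult_right[OF fi, of B]]) auto
  then show ?thesis by (simp add: set_integrable_def)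
qed

lemma plateau_sequence:
  fixes a :: real
  assumes a: "0 \<le> a" "a < 1"
  obtains \<phi> :: "nat \<Rightarrow> real \<Rightarrow> real"
  where "\<And>k. test_fun_01 (\<phi> k)" "\<And>k t. \<bar>\<phi> k t\<bar> \<le> 1"
    and "\<And>t. (\<lambda>k. \<phi> k t) \<longlonglongrightarrow> indicator {a<..<1} t"
proof -
  define e where "e k = (1 - a) / 4 * inverse (real (Suc k))" for k
  have e_le: "4 * e k \<le> 1 - a" for k
    using a mult_left_le_one_le[of "real k" a] unfolding e_def by (simp add: field_simps)
  have e_cond: "a + e k + e k \<le> 1 - 2 * e k" for k
    using e_le[of k] by linarith
  have e_pos: "e k > 0" for k
    using a by (simp add: e_def)
  have "e \<longlonglongrightarrow> 0"
    unfolding e_def by (rule tendsto_mult_right_zero[OF LIMSEQ_inverse_real_of_nat])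
  define \<phi> where "\<phi> k = plateau (a + e k) (1 - 2 * e k) (e k)" for k
  have "(\<lambda>k. \<phi> k t) \<longlonglongrightarrow> indicator {a<..<1} t" for t
  proof (cases "a < t \<and> t < 1")
    case True
    then have "eventually (\<lambda>k. e k < min (t - a) (1 - t) / 2) sequentially"
      using \<open>e \<longlonglongrightarrow> 0\<close> by (intro order_tendstoD(2)) auto
    then have "eventually (\<lambda>k. \<phi> k t = 1) sequentially"
      unfolding \<phi>_def by eventually_elim (use e_pos e_cond in \<open>auto intro: plateau_eq_1\<close>)
    then show ?thesis using True by (simp add: tendsto_eventually)
  next
    case False
    then have "\<phi> k t = 0" for k
      unfolding \<phi>_def using e_pos[of k] e_cond[of k] by (intro plateau_eq_0) auto
    then show ?thesis using False by simp
  qed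
  moreover have "test_fun_01 (\<phi> k)" "\<bar>\<phi> k t\<bar> \<le> 1" for k t
    unfolding \<phi>_def using e_pos[of k] e_cond[of k] a plateau_bounds[OF e_pos[of k] e_cond[of k]]
    by (auto intro!: test_fun_01_plateau e_pos)
  ultimately show ?thesis using that by blast
qed

lemma integral_Ioo_eq_0_if_orthogonal_to_test_fun_01:
  fixes w :: "real \<Rightarrow> real"
  assumes w: "integrable lborel w"
    and orth: "\<And>\<phi>. test_fun_01 \<phi> \<Longrightarrow> (\<integral>t. w t * \<phi> t \<partial>lborel) = 0"
    and a: "0 \<le> a" "a < 1"
  shows "(\<integral>t. indicator {a<..<1} t * w t \<partial>lborel) = 0"
proof -
  obtain \<phi> where \<phi>: "\<And>k. test_fun_01 (\<phi> k)" "\<And>k t. \<bar>\<phi> k t\<bar> \<le> 1"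
    and lim: "\<And>t. (\<lambda>k. \<phi> k t) \<longlonglongrightarrow> indicator {a<..<1} t"
    using plateau_sequence[OF a] by blast
  have [measurable]: "\<phi> k \<in> borel_measurable borel" for k
    using smooth_continuous_on[OF smooth_if_test_fun_01[OF \<phi>(1)]]
    by (intro borel_measurable_continuous_onI)
  have [measurable]: "w \<in> borel_measurable borel"
    using borel_measurable_integrable[OF w] by simp
  have "(\<lambda>k. \<integral>t. w t * \<phi> k t \<partial>lborel) \<longlonglongrightarrow> (\<integral>t. w t * indicator {a<..<1} t \<partial>lborel)"
  proof (rule integral_dominated_convergence[where w="\<lambda>t. norm (w t)"])
    show "AE t in lborel. norm (w t * \<phi> k t) \<le> norm (w t)" for k
      using \<phi>(2) by (auto simp: abs_mult intro!: mult_left_le)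
  qed (use w lim in \<open>auto intro!: tendsto_mult_left\<close>)
  then show ?thesis
    using orth[OF \<phi>(1)] by (simp add: LIMSEQ_const_iff mult.commute)
qed

lemma AE_eq_0_if_orthogonal_to_test_fun_01:
  fixes w :: "real \<Rightarrow> real"
  assumes w: "set_integrable lborel {0<..<1} w"
    and orth: "\<And>\<phi>. test_fun_01 \<phi> \<Longrightarrow> (LINT t:{0<..<1}|lborel. w t * \<phi> t) = 0"
  shows "AE t in lborel. t \<in> {0<..<1} \<longrightarrow> w t = 0"
proof -
  define W where "W t = indicator {0<..<1} t * w t" for t
  have W: "integrable lborel W"
    using w unfolding set_integrable_def W_def[abs_def] by simp
  have W_orth: "(\<integral>t. W t * \<phi> t \<partial>lborel) = 0" if "test_fun_01 \<phi>" for \<phi>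
    using orth[OF that] by (simp add: set_lebesgue_integral_def W_def mult_ac)
  have "AE t in lborel. W t = 0"
  proof (rule AE_eq_0_if_integral_Ioi_eq_0[OF W])
    fix b :: real
    show "(\<integral>t. indicator {b<..} t * W t \<partial>lborel) = 0"
    proof (cases "b < 1")
      case True
      have "(\<lambda>t. indicator {b<..} t * W t) = (\<lambda>t. indicator {max b 0<..<1} t * W t)"
        by (auto simp: W_def indicator_def)
      then show ?thesis
        using integral_Ioo_eq_0_if_orthogonal_to_test_fun_01[OF W W_orth, of "max b 0"] True by simp
    next
      case False
      then have "(\<lambda>t. indicator {b<..} t * W t) = (\<lambda>_. 0)"
        by (auto simp: W_def indicator_def)
      then show ?thesis by simp
    qed
  qed
  then show ?thesis by eventually_elim (auto simp: W_def)
qed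

lemma weak_deriv_01_unique_AE:
  assumes g1: "is_weak_deriv_01 v g1" and g2: "is_weak_deriv_01 v g2"
  shows "AE t in lborel. t \<in> {0<..<1} \<longrightarrow> g1 t = g2 t"
proof -
  have int: "set_integrable lborel {0<..<1} g1" "set_integrable lborel {0<..<1} g2"
    using g1 g2 by (simp_all add: is_weak_deriv_01_def)
  have "AE t in lborel. t \<in> {0<..<1} \<longrightarrow> g1 t - g2 t = 0"
  proof (rule AE_eq_0_if_orthogonal_to_test_fun_01)
    show "set_integrable lborel {0<..<1} (\<lambda>t. g1 t - g2 t)"
      using int by (rule set_integral_diff)
    fix \<phi> assume \<phi>: "test_fun_01 \<phi>"
    have "continuous_on {0..1} \<phi>"
      by (rule smooth_continuous_on[OF smooth_if_test_fun_01[OF \<phi>]])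
    then have "set_integrable lborel {0<..<1} (\<lambda>t. g1 t * \<phi> t)"
      "set_integrable lborel {0<..<1} (\<lambda>t. g2 t * \<phi> t)"
      using int by (auto intro: set_integrable_mult_continuous)
    moreover have "(LINT t:{0<..<1}|lborel. g1 t * \<phi> t) = (LINT t:{0<..<1}|lborel. g2 t * \<phi> t)"
      using g1 g2 \<phi> by (simp add: is_weak_deriv_01_def)
    ultimately show "(LINT t:{0<..<1}|lborel. (g1 t - g2 t) * \<phi> t) = 0"
      by (simp add: left_diff_distrib set_integral_diff)
  qed
  then show ?thesis by simp
qed

lemma set_integral_abs_powr_cong_AE:
  fixes f g :: "real \<Rightarrow> real"
  assumes f: "set_integrable lborel {0<..<1} f" and g: "set_integrable lborel {0<..<1} g"
    and fg: "AE t in lborel. t \<in> {0<..<1} \<longrightarrow> f t = g t"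
  shows "(LINT t:{0<..<1}|lborel. \<bar>f t\<bar> powr q) = (LINT t:{0<..<1}|lborel. \<bar>g t\<bar> powr q)"
proof -
  have eq: "(LINT t:{0<..<1}|lborel. \<bar>v t\<bar> powr q) = (\<integral>t. \<bar>indicator {0<..<1} t * v t\<bar> powr q \<partial>lborel)"
    for v :: "real \<Rightarrow> real"
    unfolding set_lebesgue_integral_def
    by (intro Bochner_Integration.integral_cong) (auto simp: indicator_def)
  have [measurable]: "(\<lambda>t. indicator {0<..<1} t * f t) \<in> borel_measurable lborel"
    "(\<lambda>t. indicator {0<..<1} t * g t) \<in> borel_measurable lborel"
    using f g by (auto simp: set_integrable_def dest: borel_measurable_integrable)
  show ?thesis unfolding eq
  proof (rule integral_cong_AE)
    show "AE t in lborel. \<bar>indicator {0<..<1} t * f t\<bar> powr q = \<bar>indicator {0<..<1} t * g t\<bar> powr q"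
      using fg by eventually_elim (auto simp: indicator_def)
  qed measurable
qed

lemma set_integral_abs_powr_nonneg: "0 \<le> (LINT t:A|M. \<bar>v t\<bar> powr (q::real))"
  unfolding set_lebesgue_integral_def
  by (intro Bochner_Integration.integral_nonneg) (auto simp: indicator_def)

text \<open>Whichever weak derivative the choice in \<open>weak_deriv_01\<close> picks, it agrees with any
  other one almost everywhere, so the norm can be computed from any weak derivative.\<close>

lemma norm_1p_powr_eq:
  assumes g: "is_weak_deriv_01 v g" and q: "q > 0"
  shows "norm_1p q v powr q
    = (LINT t:{0<..<1}|lborel. \<bar>v t\<bar> powr q) + (LINT t:{0<..<1}|lborel. \<bar>g t\<bar> powr q)"
proof -
  have g': "is_weak_deriv_01 v (weak_deriv_01 v)"
    unfolding weak_deriv_01_def by (rule someI[where P="is_weak_deriv_01 v", OF g])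
  have "(LINT t:{0<..<1}|lborel. \<bar>weak_deriv_01 v t\<bar> powr q) = (LINT t:{0<..<1}|lborel. \<bar>g t\<bar> powr q)"
    using g g' weak_deriv_01_unique_AE[OF g' g]
    by (intro set_integral_abs_powr_cong_AE) (auto simp: is_weak_deriv_01_def)
  then show ?thesis
    using q set_integral_abs_powr_nonneg[of _ _ v q] set_integral_abs_powr_nonneg[of _ _ g q]
    by (simp add: norm_1p_def norm_0p_def powr_powr)
qed

lemma abs_increment_le_of_deriv_bound:
  fixes f g f' g' :: "real \<Rightarrow> real"
  assumes "a \<le> b"
    and f: "\<And>z. z \<in> {a..b} \<Longrightarrow> (f has_real_derivative f' z) (at z within {a..b})"
    and g: "\<And>z. z \<in> {a..b} \<Longrightarrow> (g has_real_derivative g' z) (at z within {a..b})"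
    and bound: "\<And>z. z \<in> {a..b} \<Longrightarrow> \<bar>f' z\<bar> \<le> g' z"
  shows "\<bar>f b - f a\<bar> \<le> g b - g a"
proof -
  have "h b - h a \<le> 0"
    if h: "\<And>z. z \<in> {a..b} \<Longrightarrow> (h has_real_derivative h' z) (at z within {a..b})"
      and h': "\<And>z. z \<in> {a..b} \<Longrightarrow> h' z \<le> 0" for h h'
  proof -
    obtain z where "z \<in> {a..b}" "h b - h a = h' z * (b - a)"
      using mvt_very_simple[of a b h "\<lambda>z. (*) (h' z)"] \<open>a \<le> b\<close> h
      by (auto simp: has_field_derivative_def)
    then show ?thesis using \<open>a \<le> b\<close> h' by (simp add: mult_nonpos_nonneg)
  qed
  from this[of "\<lambda>z. f z - g z" "\<lambda>z. f' z - g' z"] this[of "\<lambda>z. - f z - g z" "\<lambda>z. - f' z - g' z"]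
  show ?thesis
    using f g bound by (force intro!: derivative_eq_intros simp: abs_le_iff)
qed

lemma set_integrable_01_if_continuous_on:
  assumes "continuous_on {0..1} f" shows "set_integrable lborel {0<..<1} (f :: real \<Rightarrow> real)"
proof -
  have "set_integrable lborel {0..1} f"
    unfolding set_integrable_def using assms by (rule borel_integrable_compact[rotated]) auto
  then show ?thesis by (rule set_integrable_subset) auto
qed

lemma set_integral_01_eq_integral:
  fixes f :: "real \<Rightarrow> real"
  assumes "set_integrable lborel {0<..<1} f"
  shows "f integrable_on {0..1}" "(LINT t:{0<..<1}|lborel. f t) = integral {0..1} f"
  using set_borel_integral_eq_integral[OF assms] integrable_on_open_interval_real[of f 0 1]
    integral_open_interval_real[of 0 1 f] by auto

lemma abs_powr_of_nat: "p > 0 \<Longrightarrow> \<bar>y\<bar> powr real p = \<bar>y\<bar> ^ p"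
  by (cases "y = 0") (auto simp: powr_realpow)

lemma max_power_le_add_power:
  fixes \<alpha> \<beta> :: real
  shows "0 \<le> \<alpha> \<Longrightarrow> 0 \<le> \<beta> \<Longrightarrow> max \<alpha> \<beta> ^ p \<le> \<alpha> ^ p + \<beta> ^ p"
  by (simp add: max_def)

lemma has_integral_power_dist_ends:
  fixes a b :: real
  assumes "a \<le> b"
  shows "((\<lambda>t. (t - a) ^ p + (b - t) ^ p) has_integral 2 * (b - a) ^ (p + 1) / real (p + 1)) {a..b}"
proof -
  define F where "F t = ((t - a) ^ Suc p - (b - t) ^ Suc p) * inverse (Suc p)" for t
  have "(F has_real_derivative (t - a) ^ p + (b - t) ^ p) (at t within {a..b})" for t
    unfolding F_def by (rule derivative_eq_intros refl)+ (simp add: field_simps)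
  then have "((\<lambda>t. (t - a) ^ p + (b - t) ^ p) has_integral F b - F a) {a..b}"
    by (intro fundamental_theorem_of_calculus[OF assms])
      (auto simp: has_real_derivative_iff_has_vector_derivative)
  moreover have "F b - F a = 2 * (b - a) ^ (p + 1) / real (p + 1)"
    by (simp add: F_def divide_inverse)
  ultimately show ?thesis by simp
qed

section \<open>Error of the piecewise linear interpolant\<close>

locale twice_differentiable_01 =
  fixes u u' u'' :: "real \<Rightarrow> real"
  assumes u': "\<forall>t\<in>{0..1}. (u has_real_derivative u' t) (at t within {0..1})"
    and u'': "\<forall>t\<in>{0..1}. (u' has_real_derivative u'' t) (at t within {0..1})"
    and u''_cont: "continuous_on {0..1} u''"
begin

definition u''_sup_norm :: real where
  "u''_sup_norm = (SUP t\<in>{0..1}. \<bar>u'' t\<bar>)"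

lemma abs_u''_le_sup_norm: "t \<in> {0..1} \<Longrightarrow> \<bar>u'' t\<bar> \<le> u''_sup_norm"
  unfolding u''_sup_norm_def
  by (intro cSUP_upper bounded_imp_bdd_above compact_imp_bounded compact_continuous_image
      continuous_intros u''_cont) auto

lemma u''_sup_norm_nonneg: "u''_sup_norm \<ge> 0"
  using abs_u''_le_sup_norm[of 0] by simp

lemma has_real_derivative_u_within:
  "{a..b} \<subseteq> {0..1} \<Longrightarrow> z \<in> {a..b} \<Longrightarrow> (u has_real_derivative u' z) (at z within {a..b})"
  using u' by (blast intro: DERIV_subset)

lemma has_real_derivative_u'_within:
  "{a..b} \<subseteq> {0..1} \<Longrightarrow> z \<in> {a..b} \<Longrightarrow> (u' has_real_derivative u'' z) (at z within {a..b})"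
  using u'' by (blast intro: DERIV_subset)

lemma u'_lipschitz:
  assumes "s \<in> {0..1}" "t \<in> {0..1}"
  shows "\<bar>u' s - u' t\<bar> \<le> u''_sup_norm * \<bar>s - t\<bar>"
proof -
  have "\<bar>u' b - u' a\<bar> \<le> u''_sup_norm * b - u''_sup_norm * a" if "a \<le> b" "a \<in> {0..1}" "b \<in> {0..1}" for a b
    using that by (intro abs_increment_le_of_deriv_bound[where f'=u'' and g'="\<lambda>_. u''_sup_norm"])
      (auto intro!: has_real_derivative_u'_within derivative_eq_intros abs_u''_le_sup_norm)
  from this[of s t] this[of t s] assms show ?thesis
    by (cases "s \<le> t") (auto simp: abs_minus_commute algebra_simps)
qed

lemma taylor_remainder_bound:
  assumes t: "t \<in> {0..1}" and y: "y \<in> {0..1}"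
  shows "\<bar>u y - u t - u' t * (y - t)\<bar> \<le> u''_sup_norm / 2 * (y - t)\<^sup>2"
proof -
  define R where "R z = u z - u' t * z" for z
  have R: "(R has_real_derivative u' z - u' t) (at z within {a..b})"
    if "{a..b} \<subseteq> {0..1}" "z \<in> {a..b}" for a b z
    unfolding R_def using has_real_derivative_u_within[OF that]
    by (auto intro!: derivative_eq_intros)
  have lip: "\<bar>u' z - u' t\<bar> \<le> u''_sup_norm * \<bar>z - t\<bar>" if "z \<in> {0..1}" for z
    using u'_lipschitz[OF that t] .
  consider "t \<le> y" | "y \<le> t" by linarith
  then have "\<bar>R y - R t\<bar> \<le> u''_sup_norm / 2 * (y - t)\<^sup>2"
  proof cases
    case 1
    have "\<bar>u' z - u' t\<bar> \<le> u''_sup_norm * (z - t)" if "z \<in> {t..y}" for z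
      using lip[of z] that t y by auto
    then have "\<bar>R y - R t\<bar> \<le> u''_sup_norm / 2 * (y - t)\<^sup>2 - u''_sup_norm / 2 * (t - t)\<^sup>2"
      using 1 t y
      by (intro abs_increment_le_of_deriv_bound[where g="\<lambda>z. u''_sup_norm / 2 * (z - t)\<^sup>2"
            and g'="\<lambda>z. u''_sup_norm * (z - t)"])
        (auto intro!: R derivative_eq_intros)
    then show ?thesis by simp
  next
    case 2
    have "\<bar>u' z - u' t\<bar> \<le> u''_sup_norm * (t - z)" if "z \<in> {y..t}" for z
      using lip[of z] that t y by (auto simp: abs_minus_commute)
    then have "\<bar>R t - R y\<bar> \<le> - u''_sup_norm / 2 * (t - t)\<^sup>2 - (- u''_sup_norm / 2 * (t - y)\<^sup>2)"
      using 2 t y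
      by (intro abs_increment_le_of_deriv_bound[where g="\<lambda>z. - u''_sup_norm / 2 * (t - z)\<^sup>2"
            and g'="\<lambda>z. u''_sup_norm * (t - z)"])
        (auto intro!: R derivative_eq_intros simp: field_simps)
    then show ?thesis by (simp add: abs_minus_commute power2_commute)
  qed
  then show ?thesis by (simp add: R_def algebra_simps)
qed

context
  fixes a b t :: real
  assumes ab: "0 \<le> a" "a < b" "b \<le> 1" and t: "t \<in> {a..b}"
begin

lemma taylor_remainders_at_ends:
  "\<bar>u a - u t - u' t * (a - t)\<bar> \<le> u''_sup_norm / 2 * (t - a)\<^sup>2"
  "\<bar>u b - u t - u' t * (b - t)\<bar> \<le> u''_sup_norm / 2 * (b - t)\<^sup>2"
  using ab t taylor_remainder_bound[of t a] taylor_remainder_bound[of t b]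
  by (auto simp: power2_commute)

lemma interpolation_slope_error:
  "\<bar>u' t - (u b - u a) / (b - a)\<bar> \<le> u''_sup_norm / 2 * max (t - a) (b - t)"
proof -
  define Ra where "Ra = u a - u t - u' t * (a - t)"
  define Rb where "Rb = u b - u t - u' t * (b - t)"
  define M where "M = max (t - a) (b - t)"
  have "(t - a) * (t - a) \<le> M * (t - a)" "(b - t) * (b - t) \<le> M * (b - t)"
    using t by (auto simp: M_def intro!: mult_right_mono)
  then have "(t - a)\<^sup>2 + (b - t)\<^sup>2 \<le> M * (b - a)"
    by (simp add: power2_eq_square algebra_simps)
  then have "u''_sup_norm / 2 * ((t - a)\<^sup>2 + (b - t)\<^sup>2) \<le> u''_sup_norm / 2 * (M * (b - a))"
    using u''_sup_norm_nonneg by (intro mult_left_mono) auto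
  then have "\<bar>Ra - Rb\<bar> \<le> u''_sup_norm / 2 * M * (b - a)"
    using taylor_remainders_at_ends abs_triangle_ineq4[of Ra Rb]
    unfolding Ra_def[symmetric] Rb_def[symmetric] by (simp add: algebra_simps)
  moreover have "u' t - (u b - u a) / (b - a) = (Ra - Rb) / (b - a)"
    using ab by (simp add: Ra_def Rb_def field_simps)
  ultimately show ?thesis
    using ab by (simp add: abs_divide pos_divide_le_eq M_def)
qed

lemma interpolation_value_error:
  "\<bar>u t - (u a + (u b - u a) / (b - a) * (t - a))\<bar> \<le> u''_sup_norm * (b - a)\<^sup>2 / 8"
proof -
  define Ra where "Ra = u a - u t - u' t * (a - t)"
  define Rb where "Rb = u b - u t - u' t * (b - t)"
  have "\<bar>Ra * (b - t)\<bar> \<le> u''_sup_norm / 2 * (t - a)\<^sup>2 * (b - t)"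
    "\<bar>Rb * (t - a)\<bar> \<le> u''_sup_norm / 2 * (b - t)\<^sup>2 * (t - a)"
    using t mult_right_mono[OF taylor_remainders_at_ends(1), of "b - t"]
      mult_right_mono[OF taylor_remainders_at_ends(2), of "t - a"]
    unfolding Ra_def[symmetric] Rb_def[symmetric] by (auto simp: abs_mult)
  moreover have "u''_sup_norm / 2 * (t - a)\<^sup>2 * (b - t) + u''_sup_norm / 2 * (b - t)\<^sup>2 * (t - a)
      = u''_sup_norm / 2 * ((t - a) * (b - t)) * (b - a)"
    by (simp add: power2_eq_square field_simps)
  ultimately have "\<bar>Ra * (b - t) + Rb * (t - a)\<bar> \<le> u''_sup_norm / 2 * ((t - a) * (b - t)) * (b - a)"
    using abs_triangle_ineq[of "Ra * (b - t)" "Rb * (t - a)"] by linarith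
  also have "\<dots> \<le> u''_sup_norm / 2 * ((b - a)\<^sup>2 / 4) * (b - a)"
  proof -
    have "(b - a)\<^sup>2 / 4 - (t - a) * (b - t) = ((t - a) - (b - t))\<^sup>2 / 4"
      by (simp add: power2_eq_square field_simps)
    then have "(t - a) * (b - t) \<le> (b - a)\<^sup>2 / 4"
      by (smt (verit) zero_le_power2 divide_nonneg_pos)
    then show ?thesis using ab u''_sup_norm_nonneg by (intro mult_right_mono mult_left_mono) auto
  qed
  finally have "\<bar>Ra * (b - t) + Rb * (t - a)\<bar> / (b - a) \<le> u''_sup_norm * (b - a)\<^sup>2 / 8"
    using ab by (simp add: pos_divide_le_eq)
  moreover have "u t - (u a + (u b - u a) / (b - a) * (t - a)) = - ((Ra * (b - t) + Rb * (t - a)) / (b - a))"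
    using ab by (simp add: Ra_def Rb_def field_simps)
  ultimately show ?thesis
    using ab by (simp add: abs_divide)
qed

end

end

locale p1_interpolant = twice_differentiable_01 +
  fixes x :: "nat \<Rightarrow> real" and N :: nat and uI :: "real \<Rightarrow> real"
  assumes x0: "x 0 = 0" and xN: "x (N + 1) = 1"
    and xmono: "\<forall>i\<le>N. x i < x (Suc i)"
    and uI_cont: "continuous_on {0..1} uI"
    and uI_affine: "\<forall>i\<le>N. \<exists>a b. \<forall>t\<in>{x i..x (Suc i)}. uI t = a * t + b"
    and uI_nodes: "\<forall>i\<le>N + 1. uI (x i) = u (x i)"
begin

lemma node_less: "i < j \<Longrightarrow> j \<le> N + 1 \<Longrightarrow> x i < x j"
proof (induction j)
  case (Suc j)
  have "x j < x (Suc j)" using xmono Suc.prems by auto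
  then show ?case using Suc by (cases "i = j") auto
qed simp

lemma node_le: "i \<le> j \<Longrightarrow> j \<le> N + 1 \<Longrightarrow> x i \<le> x j"
  using node_less by (cases "i = j") (auto intro: less_imp_le)

lemma node_in_01: "i \<le> N + 1 \<Longrightarrow> x i \<in> {0..1}"
  using node_le[of 0 i] node_le[of i "N + 1"] x0 xN by auto

lemma cell_subset_01: "i \<le> N \<Longrightarrow> {x i..x (Suc i)} \<subseteq> {0..1}"
  using node_in_01[of i] node_in_01[of "Suc i"] by auto

lemma cell_containing:
  assumes "0 \<le> t" "t < 1"
  obtains i where "i \<le> N" "x i \<le> t" "t < x (Suc i)"
proof -
  define S where "S = {j. j \<le> N + 1 \<and> x j \<le> t}"
  define i where "i = Max S"
  have S: "finite S" "0 \<in> S" unfolding S_def using assms x0 by auto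
  then have "i \<in> S" unfolding i_def by (intro Max_in) auto
  moreover have "Suc i \<notin> S"
    using Max_ge[OF S(1), of "Suc i"] unfolding i_def[symmetric] by auto
  moreover have "i \<noteq> N + 1"
    using \<open>i \<in> S\<close> assms xN unfolding S_def by auto
  ultimately show ?thesis
    by (intro that[of i]) (auto simp: S_def)
qed

definition slope :: "nat \<Rightarrow> real" where
  "slope i = (u (x (Suc i)) - u (x i)) / (x (Suc i) - x i)"

lemma uI_on_cell:
  assumes i: "i \<le> N" and t: "t \<in> {x i..x (Suc i)}"
  shows "uI t = u (x i) + slope i * (t - x i)"
proof -
  obtain a b where ab: "\<forall>t\<in>{x i..x (Suc i)}. uI t = a * t + b" using uI_affine i by blast
  have lt: "x i < x (Suc i)" using xmono i by auto
  then have "x i \<in> {x i..x (Suc i)}" "x (Suc i) \<in> {x i..x (Suc i)}" by auto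
  then have "a * x i + b = u (x i)" "a * x (Suc i) + b = u (x (Suc i))"
    using ab uI_nodes i by (metis le_SucI Suc_eq_plus1 Suc_le_mono)+
  then have "a = slope i" unfolding slope_def using lt by (simp add: field_simps)
  then show ?thesis using ab t \<open>a * x i + b = u (x i)\<close> by (auto simp: algebra_simps)
qed

text \<open>The derivative of \<open>uI\<close> off the nodes; its values at the nodes are irrelevant.\<close>

definition uI' :: "real \<Rightarrow> real" where
  "uI' t = (\<Sum>i\<le>N. slope i * indicator {x i..<x (Suc i)} t)"

lemma uI'_on_cell:
  assumes i: "i \<le> N" and t: "t \<in> {x i..<x (Suc i)}"
  shows "uI' t = slope i"
proof -
  have "t \<notin> {x j..<x (Suc j)}" if "j \<le> N" "j \<noteq> i" for j
    using that i t node_le[of "Suc j" i] node_le[of "Suc i" j] by (cases "j < i") auto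
  then have "uI' t = (\<Sum>j\<le>N. if j = i then slope i else 0)"
    unfolding uI'_def using t by (intro sum.cong) auto
  then show ?thesis using i by simp
qed

definition mesh :: real where
  "mesh = Max ((\<lambda>i. x (Suc i) - x i) ` {0..N})"

lemma cell_width_le_mesh: "i \<le> N \<Longrightarrow> x (Suc i) - x i \<le> mesh"
  unfolding mesh_def by (rule Max_ge) auto

lemma mesh_pos: "mesh > 0"
  using cell_width_le_mesh[of 0] xmono by fastforce

lemma abs_interp_error_le:
  assumes t: "t \<in> {0..1}"
  shows "\<bar>u t - uI t\<bar> \<le> u''_sup_norm * mesh\<^sup>2 / 8"
proof (cases "t = 1")
  case True
  then show ?thesis using uI_nodes xN u''_sup_norm_nonneg by force
next
  case False
  with t have "0 \<le> t" "t < 1" by auto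
  then obtain i where i: "i \<le> N" "x i \<le> t" "t < x (Suc i)"
    by (rule cell_containing)
  have "\<bar>u t - uI t\<bar> \<le> u''_sup_norm * (x (Suc i) - x i)\<^sup>2 / 8"
    using interpolation_value_error[of "x i" "x (Suc i)" t] uI_on_cell[of i t] i
      node_in_01[of i] node_in_01[of "Suc i"] xmono
    by (simp add: slope_def)
  also have "\<dots> \<le> u''_sup_norm * mesh\<^sup>2 / 8"
    using cell_width_le_mesh[OF i(1)] i u''_sup_norm_nonneg
    by (intro divide_right_mono mult_left_mono power_mono) auto
  finally show ?thesis .
qed

lemma abs_interp_deriv_error_le:
  assumes i: "i \<le> N" and t: "t \<in> {x i..<x (Suc i)}"
  shows "\<bar>u' t - uI' t\<bar> \<le> u''_sup_norm / 2 * max (t - x i) (x (Suc i) - t)"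
  using interpolation_slope_error[of "x i" "x (Suc i)" t] uI'_on_cell[OF i t] i t
    node_in_01[of i] node_in_01[of "Suc i"] xmono
  by (simp add: slope_def)

lemma abs_interp_deriv_error_le_mesh:
  assumes t: "t \<in> {0<..<1}"
  shows "\<bar>u' t - uI' t\<bar> \<le> u''_sup_norm * mesh / 2"
proof -
  from t have "0 \<le> t" "t < 1" by auto
  then obtain i where i: "i \<le> N" "x i \<le> t" "t < x (Suc i)"
    by (rule cell_containing)
  have "max (t - x i) (x (Suc i) - t) \<le> mesh"
    using cell_width_le_mesh[OF i(1)] i by auto
  then have "u''_sup_norm / 2 * max (t - x i) (x (Suc i) - t) \<le> u''_sup_norm / 2 * mesh"
    using u''_sup_norm_nonneg by (intro mult_left_mono) auto
  then show ?thesis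
    using abs_interp_deriv_error_le[of i t] i by simp
qed

lemma integral_sum_cells:
  fixes F :: "real \<Rightarrow> real"
  assumes F: "F integrable_on {0..1}"
  shows "integral {0..1} F = (\<Sum>i\<le>N. integral {x i..x (Suc i)} F)"
proof -
  have "integral {x 0..x (Suc n)} F = (\<Sum>i\<le>n. integral {x i..x (Suc i)} F)" if "n \<le> N" for n
    using that
  proof (induction n)
    case (Suc n)
    have "{x 0..x (Suc (Suc n))} \<subseteq> {0..1}"
      using node_in_01[of 0] node_in_01[of "Suc (Suc n)"] Suc.prems by auto
    then have "integral {x 0..x (Suc n)} F + integral {x (Suc n)..x (Suc (Suc n))} F
        = integral {x 0..x (Suc (Suc n))} F"
      using node_le[of 0 "Suc n"] node_le[of "Suc n" "Suc (Suc n)"] Suc.prems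
      by (intro Henstock_Kurzweil_Integration.integral_combine integrable_on_subinterval[OF F]) auto
    then show ?case using Suc by simp
  qed simp
  from this[of N] show ?thesis using x0 xN by simp
qed

lemma u_cont: "continuous_on {0..1} u"
  using u' by (intro DERIV_continuous_on) auto

lemma u'_cont: "continuous_on {0..1} u'"
  using u'' by (intro DERIV_continuous_on) auto

lemma set_integrable_interp_error: "set_integrable lborel {0<..<1} (\<lambda>t. u t - uI t)"
  by (intro set_integrable_01_if_continuous_on continuous_intros u_cont uI_cont)

lemma set_integrable_interp_deriv_error: "set_integrable lborel {0<..<1} (\<lambda>t. u' t - uI' t)"
proof -
  have "integrable lborel uI'"
    unfolding uI'_def[abs_def] using xmono
    by (intro Bochner_Integration.integrable_sum integrable_mult_right integrable_real_indicator)
      (auto simp: emeasure_lborel_Ico less_imp_le)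
  then have "set_integrable lborel {0<..<1} uI'"
    unfolding set_integrable_def by (intro integrable_mult_indicator) auto
  with set_integrable_01_if_continuous_on[OF u'_cont] show ?thesis
    by (rule set_integral_diff(1))
qed

lemma has_real_derivative_interp_error:
  assumes i: "i \<le> N" and t: "t \<in> {x i<..<x (Suc i)}"
  shows "((\<lambda>t. u t - uI t) has_real_derivative u' t - uI' t) (at t)"
proof -
  have t01: "t \<in> {0<..<1}" using t cell_subset_01[OF i] by auto
  have "at t within {0..1} = at t" using t01 by (intro at_within_interior) auto
  then have "(u has_real_derivative u' t) (at t)"
    using u' t01 by (metis greaterThanLessThan_subseteq_atLeastAtMost_iff order_refl subsetD)
  moreover have "(uI has_real_derivative slope i) (at t)"
  proof (rule has_field_derivative_transform_within_open[where S="{x i<..<x (Suc i)}"])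
    show "((\<lambda>s. u (x i) + slope i * (s - x i)) has_real_derivative slope i) (at t)"
      by (auto intro!: derivative_eq_intros)
  qed (use t uI_on_cell[OF i] in auto)
  moreover have "uI' t = slope i" using uI'_on_cell[OF i] t by auto
  ultimately show ?thesis by (auto intro: DERIV_diff)
qed

text \<open>The boundary terms vanish because \<open>u - uI\<close> vanishes at the nodes.\<close>

lemma integral_cell_by_parts:
  assumes i: "i \<le> N" and \<phi>: "smooth \<phi>"
  shows "integral {x i..x (Suc i)} (\<lambda>t. (u t - uI t) * deriv \<phi> t)
    = - integral {x i..x (Suc i)} (\<lambda>t. (u' t - uI' t) * \<phi> t)"
proof -
  define I where "I = integral {x i..x (Suc i)} (\<lambda>t. (u t - uI t) * deriv \<phi> t)"
  have cont: "continuous_on {x i..x (Suc i)} (\<lambda>t. u t - uI t)"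
    using continuous_on_subset[OF continuous_on_diff[OF u_cont uI_cont] cell_subset_01[OF i]] .
  have "((\<lambda>t. (u t - uI t) * deriv \<phi> t) has_integral I) {x i..x (Suc i)}"
    unfolding I_def using smooth_continuous_on[OF smooth_deriv[OF \<phi>]]
    by (intro integrable_integral integrable_continuous_real continuous_on_mult[OF cont])
  then have "((\<lambda>t. (u t - uI t) * deriv \<phi> t) has_integral
      ((u (x (Suc i)) - uI (x (Suc i))) * \<phi> (x (Suc i)) - (u (x i) - uI (x i)) * \<phi> (x i) - (- I)))
      {x i..x (Suc i)}"
    using uI_nodes i by simp
  then have "((\<lambda>t. (u' t - uI' t) * \<phi> t) has_integral - I) {x i..x (Suc i)}"
    using i xmono cont smooth_continuous_on[OF \<phi>] has_real_derivative_interp_error[OF i]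
      smooth_has_real_derivative[OF \<phi>]
    by (intro integration_by_parts_interior[OF bounded_bilinear_mult, where f'="\<lambda>t. u' t - uI' t"])
      (auto simp: has_real_derivative_iff_has_vector_derivative less_imp_le)
  then show ?thesis unfolding I_def by (simp add: integral_unique)
qed

lemma is_weak_deriv_interp_error: "is_weak_deriv_01 (\<lambda>t. u t - uI t) (\<lambda>t. u' t - uI' t)"
  unfolding is_weak_deriv_01_def
proof (intro conjI allI impI set_integrable_interp_error set_integrable_interp_deriv_error)
  fix \<phi> assume "test_fun_01 \<phi>"
  then have \<phi>: "smooth \<phi>" by (rule smooth_if_test_fun_01)
  have "set_integrable lborel {0<..<1} (\<lambda>t. (u t - uI t) * deriv \<phi> t)"
    "set_integrable lborel {0<..<1} (\<lambda>t. (u' t - uI' t) * \<phi> t)"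
    using \<phi> smooth_deriv by (auto intro!: set_integrable_mult_continuous smooth_continuous_on
        set_integrable_interp_error set_integrable_interp_deriv_error)
  note HK = this[THEN set_integral_01_eq_integral(1)] this[THEN set_integral_01_eq_integral(2)]
  have "(LINT t:{0<..<1}|lborel. (u t - uI t) * deriv \<phi> t)
      = (\<Sum>i\<le>N. integral {x i..x (Suc i)} (\<lambda>t. (u t - uI t) * deriv \<phi> t))"
    using HK integral_sum_cells by simp
  also have "\<dots> = - (\<Sum>i\<le>N. integral {x i..x (Suc i)} (\<lambda>t. (u' t - uI' t) * \<phi> t))"
    using integral_cell_by_parts[OF _ \<phi>] by (simp add: sum_negf)
  also have "\<dots> = - (LINT t:{0<..<1}|lborel. (u' t - uI' t) * \<phi> t)"
    using HK integral_sum_cells by simp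
  finally show "(LINT t:{0<..<1}|lborel. (u t - uI t) * deriv \<phi> t)
      = - (LINT t:{0<..<1}|lborel. (u' t - uI' t) * \<phi> t)" .
qed

lemma Lp_interp_error_le:
  assumes p: "p \<ge> 1"
  shows "(LINT t:{0<..<1}|lborel. \<bar>u t - uI t\<bar> powr real p) \<le> (u''_sup_norm * mesh\<^sup>2 / 8) ^ p"
proof -
  have "(LINT t:{0<..<1}|lborel. \<bar>u t - uI t\<bar> powr real p) = (LINT t:{0<..<1}|lborel. \<bar>u t - uI t\<bar> ^ p)"
    using p by (intro set_lebesgue_integral_cong) (auto simp: abs_powr_of_nat)
  also have "\<dots> \<le> (LINT t:{0<..<(1::real)}|lborel. (u''_sup_norm * mesh\<^sup>2 / 8) ^ p)"
  proof (rule set_integral_mono)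
    show "set_integrable lborel {0<..<1} (\<lambda>t. \<bar>u t - uI t\<bar> ^ p)"
      by (intro set_integrable_01_if_continuous_on continuous_intros u_cont uI_cont)
    show "set_integrable lborel {0<..<(1::real)} (\<lambda>t. (u''_sup_norm * mesh\<^sup>2 / 8) ^ p)"
      by (intro set_integrable_01_if_continuous_on continuous_intros)
  qed (use abs_interp_error_le in \<open>auto intro!: power_mono\<close>)
  also have "\<dots> = (u''_sup_norm * mesh\<^sup>2 / 8) ^ p"
    using set_integral_01_eq_integral(2)[OF set_integrable_01_if_continuous_on[of "\<lambda>_. (u''_sup_norm * mesh\<^sup>2 / 8) ^ p"]]
    by simp
  finally show ?thesis .
qed

lemma set_integrable_abs_power_interp_deriv_error:
  "set_integrable lborel {0<..<1} (\<lambda>t. \<bar>u' t - uI' t\<bar> ^ p)"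
  unfolding set_integrable_def
proof (rule Bochner_Integration.integrable_bound)
  show "integrable lborel (\<lambda>t. (u''_sup_norm * mesh / 2) ^ p * indicator {0<..<(1::real)} t)"
    by (intro integrable_mult_right integrable_real_indicator) (auto simp: emeasure_lborel_Ioo)
  have "(\<lambda>t. indicator {0<..<1} t * (u' t - uI' t)) \<in> borel_measurable lborel"
    using set_integrable_interp_deriv_error by (auto simp: set_integrable_def dest: borel_measurable_integrable)
  then have "(\<lambda>t. \<bar>indicator {0<..<1} t * (u' t - uI' t)\<bar> ^ p * indicator {0<..<1} t) \<in> borel_measurable lborel"
    by measurable
  moreover have "(\<lambda>t. \<bar>indicator {0<..<1} t * (u' t - uI' t)\<bar> ^ p * indicator {0<..<1} t)
      = (\<lambda>t. indicator {0<..<1} t *\<^sub>R \<bar>u' t - uI' t\<bar> ^ p)"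
    by (auto simp: indicator_def)
  ultimately show "(\<lambda>t. indicator {0<..<1} t *\<^sub>R \<bar>u' t - uI' t\<bar> ^ p) \<in> borel_measurable lborel"
    by simp
  show "AE t in lborel. norm (indicator {0<..<1} t *\<^sub>R \<bar>u' t - uI' t\<bar> ^ p)
      \<le> norm ((u''_sup_norm * mesh / 2) ^ p * indicator {0<..<(1::real)} t)"
    using abs_interp_deriv_error_le_mesh u''_sup_norm_nonneg mesh_pos
    by (intro AE_I2) (auto simp: indicator_def intro!: power_mono)
qed

lemma integral_cell_interp_deriv_error_le:
  assumes i: "i \<le> N"
  shows "integral {x i..x (Suc i)} (\<lambda>t. \<bar>u' t - uI' t\<bar> ^ p)
    \<le> 2 * u''_sup_norm ^ p * (mesh / 2) ^ p * (x (Suc i) - x i) / real (p + 1)"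
proof -
  define a b where "a = x i" and "b = x (Suc i)"
  have ab: "a < b" "b - a \<le> mesh" "{a..b} \<subseteq> {0..1}"
    using xmono cell_width_le_mesh cell_subset_01 i by (auto simp: a_def b_def)
  have V: "((\<lambda>t. (u''_sup_norm / 2) ^ p * ((t - a) ^ p + (b - t) ^ p)) has_integral
      (u''_sup_norm / 2) ^ p * (2 * (b - a) ^ (p + 1) / real (p + 1))) {a..b}"
    using ab by (intro has_integral_mult_right has_integral_power_dist_ends) auto
  have "integral {a..b} (\<lambda>t. \<bar>u' t - uI' t\<bar> ^ p) = integral {a<..<b} (\<lambda>t. \<bar>u' t - uI' t\<bar> ^ p)"
    by (rule integral_open_interval_real)
  also have "\<dots> \<le> integral {a<..<b} (\<lambda>t. (u''_sup_norm / 2) ^ p * ((t - a) ^ p + (b - t) ^ p))"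
  proof (rule integral_le)
    show "(\<lambda>t. \<bar>u' t - uI' t\<bar> ^ p) integrable_on {a<..<b}"
      using integrable_on_subinterval[OF set_integral_01_eq_integral(1)[OF
          set_integrable_abs_power_interp_deriv_error] ab(3)]
        integrable_on_open_interval_real by blast
    show "(\<lambda>t. (u''_sup_norm / 2) ^ p * ((t - a) ^ p + (b - t) ^ p)) integrable_on {a<..<b}"
      using V integrable_on_open_interval_real has_integral_integrable by blast
    fix t assume t: "t \<in> {a<..<b}"
    have "\<bar>u' t - uI' t\<bar> ^ p \<le> (u''_sup_norm / 2 * max (t - a) (b - t)) ^ p"
      using abs_interp_deriv_error_le[OF i, of t] t by (intro power_mono) (auto simp: a_def b_def)
    also have "\<dots> \<le> (u''_sup_norm / 2) ^ p * ((t - a) ^ p + (b - t) ^ p)"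
      unfolding power_mult_distrib using t u''_sup_norm_nonneg
      by (intro mult_left_mono max_power_le_add_power) auto
    finally show "\<bar>u' t - uI' t\<bar> ^ p \<le> (u''_sup_norm / 2) ^ p * ((t - a) ^ p + (b - t) ^ p)" .
  qed
  also have "\<dots> = (u''_sup_norm / 2) ^ p * (2 * (b - a) ^ (p + 1) / real (p + 1))"
    by (subst integral_open_interval_real[symmetric]) (rule integral_unique[OF V])
  also have "\<dots> \<le> (u''_sup_norm / 2) ^ p * (2 * (mesh ^ p * (b - a)) / real (p + 1))"
    using ab u''_sup_norm_nonneg
    by (intro mult_left_mono divide_right_mono) (auto intro!: mult_right_mono power_mono)
  finally show ?thesis
    by (simp add: a_def b_def power_divide field_simps)
qed

lemma Lp_interp_deriv_error_le:
  assumes p: "p \<ge> 1"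
  shows "(LINT t:{0<..<1}|lborel. \<bar>u' t - uI' t\<bar> powr real p)
    \<le> 2 * u''_sup_norm ^ p * (mesh / 2) ^ p / real (p + 1)"
proof -
  define C where "C = 2 * u''_sup_norm ^ p * (mesh / 2) ^ p / real (p + 1)"
  note HK = set_integral_01_eq_integral[OF set_integrable_abs_power_interp_deriv_error]
  have "(LINT t:{0<..<1}|lborel. \<bar>u' t - uI' t\<bar> powr real p)
      = (\<Sum>i\<le>N. integral {x i..x (Suc i)} (\<lambda>t. \<bar>u' t - uI' t\<bar> ^ p))"
    using p HK integral_sum_cells
    by (subst set_lebesgue_integral_cong[where g="\<lambda>t. \<bar>u' t - uI' t\<bar> ^ p"])
      (auto simp: abs_powr_of_nat)
  also have "\<dots> \<le> (\<Sum>i\<le>N. C * (x (Suc i) - x i))"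
    using integral_cell_interp_deriv_error_le by (intro sum_mono) (simp add: C_def)
  also have "\<dots> = C * (\<Sum>i\<le>N. x (Suc i) - x i)"
    by (rule sum_distrib_left[symmetric])
  also have "(\<Sum>i\<le>N. x (Suc i) - x i) = 1"
    using sum_lessThan_telescope[of x "Suc N"] x0 xN by (simp add: lessThan_Suc_atMost)
  finally show ?thesis by (simp add: C_def)
qed

lemma norm_1p_interp_error_powr_le:
  assumes p: "p \<ge> 1"
  shows "norm_1p (real p) (\<lambda>t. u t - uI t) powr real p
    \<le> (u''_sup_norm * mesh\<^sup>2 / 8) ^ p + 2 * u''_sup_norm ^ p * (mesh / 2) ^ p / real (p + 1)"
  using norm_1p_powr_eq[OF is_weak_deriv_interp_error] Lp_interp_error_le[OF p]
    Lp_interp_deriv_error_le[OF p] p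
  by simp

end

section \<open>The constant\<close>

lemma power_Suc_diff_le:
  fixes m :: real and q :: nat
  assumes "m \<ge> 0"
  shows "(m + 1)^(q + 1) - m^(q + 1) \<le> real (q + 1) * (m + 1)^q"
proof -
  have "1 + real (q + 1) * (- 1 / (m + 1)) \<le> (1 + (- 1 / (m + 1)))^(q + 1)"
    by (rule Bernoulli_inequality) (use assms in \<open>simp add: field_simps\<close>)
  also have "1 + (- 1 / (m + 1)) = m / (m + 1)" using assms by (simp add: field_simps)
  finally have "1 - real (q + 1) / (m + 1) \<le> (m / (m + 1))^(q + 1)" by simp
  then have "(1 - real (q + 1) / (m + 1)) * (m + 1)^(q + 1) \<le> (m / (m + 1))^(q + 1) * (m + 1)^(q + 1)"
    by (rule mult_right_mono) (use assms in simp)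
  also have "(m / (m + 1))^(q + 1) * (m + 1)^(q + 1) = m^(q+1)"
    using assms by (simp add: power_divide)
  also have "(1 - real (q + 1) / (m + 1)) * (m + 1)^(q + 1) = (m + 1)^(q + 1) - real (q + 1) * (m + 1)^q"
  proof -
    have "(m + 1)^(q + 1) = (m + 1) * (m + 1)^q" by simp
    moreover have "real (q + 1) / (m + 1) * ((m + 1) * (m + 1)^q) = real (q + 1) * (m + 1)^q"
      using assms by simp
    ultimately show ?thesis by (simp add: left_diff_distrib)
  qed
  finally show ?thesis by simp
qed

lemma sum_power_ge:
  fixes q :: nat
  shows "(\<Sum>k=1..m. real k ^ q) \<ge> real m ^ (q + 1) / real (q + 1)"
proof (induction m)
  case (Suc m)
  have "real (Suc m) ^ (q + 1) / real (q + 1)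
      = real m ^ (q + 1) / real (q + 1) + ((real m + 1) ^ (q + 1) - real m ^ (q + 1)) / real (q + 1)"
    by (simp add: diff_divide_distrib add.commute)
  moreover have "((real m + 1) ^ (q + 1) - real m ^ (q + 1)) / real (q + 1) \<le> (real m + 1) ^ q"
    using power_Suc_diff_le[of "real m" q] by (simp add: divide_le_eq mult.commute del: of_nat_Suc)
  ultimately show ?case using Suc by (simp add: add.commute)
qed simp

lemma S_star_eq_sum: "n \<ge> 1 \<Longrightarrow> S_star p n = (\<Sum>k=1..n-1. real k ^ (p + 1))"
  by (simp add: S_star_def atLeastLessThanSuc_atLeastAtMost[symmetric])

lemma S_star_ge:
  "n \<ge> 1 \<Longrightarrow> (real n - 1) ^ (p + 2) / real (p + 2) \<le> S_star p n"
  using sum_power_ge[where m="n - 1" and q="p + 1"] by (simp add: S_star_eq_sum of_nat_diff)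

lemma S_star_2:
  assumes "n \<ge> 1" shows "4 * S_star 2 n = ((real n - 1) * real n)\<^sup>2"
proof -
  have "4 * (\<Sum>k=1..m. real k ^ 3) = (real m * (real m + 1))\<^sup>2" for m
    by (induction m) (simp_all add: power2_eq_square power3_eq_cube algebra_simps)
  from this[of "n - 1"] show ?thesis
    using assms by (simp add: S_star_eq_sum of_nat_diff)
qed

lemma two_power_ge_linear:
  shows "p \<ge> 6 \<Longrightarrow> 8 * (p + 2) \<le> (2::nat) ^ p"
    and "p \<ge> 3 \<Longrightarrow> 8 * (p + 2) \<le> 5 * (2::nat) ^ p"
proof -
  show "p \<ge> 6 \<Longrightarrow> 8 * (p + 2) \<le> (2::nat) ^ p"
    by (induction p rule: dec_induct) simp_all
  show "p \<ge> 3 \<Longrightarrow> 8 * (p + 2) \<le> 5 * (2::nat) ^ p"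
    by (induction p rule: dec_induct) simp_all
qed

lemma cube_le_two_power_cube:
  fixes p n :: nat
  assumes p: "p \<ge> 3" and n: "n \<ge> 2" and large: "p \<ge> 6 \<or> n \<ge> 7"
  shows "real (p + 2) * real n ^ 3 \<le> 2 ^ p * (real n - 1) ^ 3"
proof (cases "p \<ge> 6")
  case True
  have "real n \<le> 2 * (real n - 1)" using n by simp
  then have "real n ^ 3 \<le> (2 * (real n - 1)) ^ 3" by (rule power_mono) simp
  also have "(2 * (real n - 1)) ^ 3 = 8 * (real n - 1) ^ 3"
    by (simp only: power_mult_distrib) simp
  finally have "real (p + 2) * real n ^ 3 \<le> real (p + 2) * (8 * (real n - 1) ^ 3)"
    by (rule mult_left_mono) simp
  also have "\<dots> = real (8 * (p + 2)) * (real n - 1) ^ 3" by simp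
  also have "\<dots> \<le> real (2 ^ p) * (real n - 1) ^ 3"
    by (intro mult_right_mono of_nat_mono two_power_ge_linear(1)[OF True]) (use n in simp)
  finally show ?thesis by simp
next
  case False
  with large obtain m where m: "n = m + 7" by (metis add.commute le_Suc_ex)
  have "8 * (real n - 1) ^ 3 - 5 * real n ^ 3 = 3 * real m ^ 3 + 39 * real m ^ 2 + 129 * real m + 13"
    unfolding m by (simp add: power2_eq_square power3_eq_cube algebra_simps)
  then have "5 * real n ^ 3 \<le> 8 * (real n - 1) ^ 3"
    by (simp add: algebra_simps)
  then have "real (p + 2) * (5 * real n ^ 3) \<le> real (p + 2) * (8 * (real n - 1) ^ 3)"
    by (rule mult_left_mono) simp
  also have "\<dots> = real (8 * (p + 2)) * (real n - 1) ^ 3" by simp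
  also have "\<dots> \<le> real (5 * 2 ^ p) * (real n - 1) ^ 3"
    by (intro mult_right_mono of_nat_mono two_power_ge_linear(2)[OF p]) (use n in simp)
  finally show ?thesis by simp
qed

text \<open>Since \<open>r\<^sup>2 \<le> (r + 2) (r - 1)\<close> for \<open>r \<ge> 2\<close>, the cube estimate lifts to the full power.\<close>

lemma power_le_of_cube_le:
  fixes p :: nat and r :: real
  assumes p: "p \<ge> 1" and r: "r \<ge> 2"
    and cube: "2 ^ p * (r - 1)^3 \<ge> real (p + 2) * r^3"
  shows "r ^ (2 * p + 1) \<le> (r + 2) ^ (p - 1) * (2 ^ p * ((r - 1) ^ (p + 2) / real (p + 2)))"
proof -
  have "(r^2)^(p-1) \<le> ((r + 2) * (r - 1))^(p-1)"
    by (rule power_mono) (use r in \<open>auto simp: power2_eq_square algebra_simps\<close>)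
  moreover have "r^3 \<le> 2 ^ p * (r - 1)^3 / real (p + 2)"
    using cube by (simp add: field_simps)
  ultimately have bound: "(r^2)^(p-1) * r^3 \<le> ((r + 2) * (r - 1))^(p-1) * (2 ^ p * (r - 1)^3 / real (p + 2))"
    by (rule mult_mono) (use r in auto)
  have lhs: "(r^2)^(p-1) * r^3 = r ^ (2 * p + 1)"
  proof -
    have "(r^2)^(p-1) * r^3 = r^(2*(p-1) + 3)" by (simp add: power_mult power_add)
    also have "2*(p-1) + 3 = 2 * p + 1" using p by simp
    finally show ?thesis .
  qed
  have rhs: "((r + 2) * (r - 1))^(p-1) * (2 ^ p * (r - 1)^3 / real (p + 2))
      = (r + 2) ^ (p - 1) * (2 ^ p * ((r - 1) ^ (p + 2) / real (p + 2)))"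
  proof -
    have "(r - 1)^(p-1) * (r - 1)^3 = (r - 1)^(p + 2)"
      using p by (simp add: power_add[symmetric])
    have "((r + 2) * (r - 1))^(p-1) * (2 ^ p * (r - 1)^3 / real (p + 2))
        = (r + 2)^(p-1) * (2 ^ p * ((r - 1)^(p-1) * (r - 1)^3) / real (p + 2))"
      by (simp only: power_mult_distrib times_divide_eq_right mult_ac)
    then show ?thesis using \<open>(r - 1)^(p-1) * (r - 1)^3 = (r - 1)^(p + 2)\<close>
      by (simp only: times_divide_eq_right)
  qed
  show ?thesis using bound unfolding lhs rhs .
qed

lemma power_le_S_star_lower_bound:
  fixes p n :: nat
  assumes p: "p \<ge> 3" and n: "n \<ge> 2"
  shows "real n ^ (2 * p + 1)
    \<le> real (n + 2) ^ (p - 1) * (real n ^ (p + 1) + 2 ^ p * ((real n - 1) ^ (p + 2) / real (p + 2)))"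
proof (cases "p \<ge> 6 \<or> n \<ge> 7")
  case True
  define r where "r = real n"
  have "r ^ (2 * p + 1) \<le> (r + 2) ^ (p - 1) * (2 ^ p * ((r - 1) ^ (p + 2) / real (p + 2)))"
    using p n True cube_le_two_power_cube[of p n] by (intro power_le_of_cube_le) (auto simp: r_def)
  also have "\<dots> \<le> (r + 2) ^ (p - 1) * (r ^ (p + 1) + 2 ^ p * ((r - 1) ^ (p + 2) / real (p + 2)))"
    using n by (intro mult_left_mono) (auto simp: r_def)
  also have "r + 2 = real (n + 2)" by (simp add: r_def)
  finally show ?thesis by (simp add: r_def)
next
  case False
  then have "p = 3 \<or> p = 4 \<or> p = 5" "n = 2 \<or> n = 3 \<or> n = 4 \<or> n = 5 \<or> n = 6" using p n by auto
  then show ?thesis by (elim disjE) (simp_all add: numeral_eq_Suc)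
qed

lemma power_le_S_star_bound:
  fixes p n :: nat
  assumes p: "p \<ge> 2" and n: "n \<ge> 1"
  shows "real n ^ (2 * p + 1) \<le> real (n + 2) ^ (p - 1) * (real n ^ (p + 1) + 2 ^ p * S_star p n)"
proof -
  consider "n = 1" | "p = 2" "n \<ge> 2" | "p \<ge> 3" "n \<ge> 2" using p n by linarith
  then show ?thesis
  proof cases
    case 1
    then show ?thesis by (simp add: S_star_def)
  next
    case 2
    define r where "r = real n"
    have "r ^ 5 + r\<^sup>2 * (r\<^sup>2 - r + 2) = (r + 2) * (r ^ 3 + ((r - 1) * r)\<^sup>2)"
      by (simp add: power2_eq_square power3_eq_cube algebra_simps numeral_eq_Suc)
    moreover have "r\<^sup>2 - r + 2 \<ge> 0" using 2 by (simp add: r_def power2_eq_square)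
    ultimately have "r ^ 5 \<le> (r + 2) * (r ^ 3 + ((r - 1) * r)\<^sup>2)"
      by (smt (verit) zero_le_mult_iff zero_le_power2)
    moreover have "real n ^ (2 * p + 1) = r ^ 5" "real (n + 2) ^ (p - 1) = r + 2"
      "real n ^ (p + 1) = r ^ 3" "2 ^ p * S_star p n = ((r - 1) * r)\<^sup>2"
      using 2 S_star_2[OF n] by (simp_all add: r_def)
    ultimately show ?thesis by simp
  next
    case 3
    then show ?thesis
      using power_le_S_star_lower_bound[of p n] S_star_ge[OF n, of p]
      by (smt (verit) mult_left_mono zero_le_power of_nat_0_le_iff)
  qed
qed

lemma S_star_constant_ge:
  fixes p n :: nat
  assumes p: "p \<ge> 2" and n: "n \<ge> 1"
  shows "1 / (real (p + 1) * 2 ^ (p - 1)) \<le>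
    real (n + 2) ^ (p - 1) / real (p + 1) * (1 / (2 ^ (p - 1) * real n ^ p) + 2 * S_star p n / real n ^ (2 * p + 1))"
proof -
  define A B a T S where "A = real n ^ p" and "B = real n ^ (p + 1)" and "a = (2::real) ^ (p - 1)"
    and "T = real (n + 2) ^ (p - 1)" and "S = S_star p n"
  have pos: "A > 0" "B > 0" "a > 0" using n by (auto simp: A_def B_def a_def)
  have AB: "real n ^ (2 * p + 1) = A * B"
    unfolding A_def B_def by (simp add: power_add[symmetric] mult_2)
  have "(2::real) ^ p = 2 * a" unfolding a_def using p
    by (metis Suc_diff_1 le_trans one_le_numeral power_Suc zero_less_one less_le_trans)
  then have "A * B \<le> T * (B + 2 * a * S)"
    using power_le_S_star_bound[OF p n] unfolding AB T_def B_def S_def by (simp add: mult.assoc)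
  have "1 / (real (p + 1) * a) = A * B / (real (p + 1) * a * (A * B))"
    using pos by simp
  also have "\<dots> \<le> T * (B + 2 * a * S) / (real (p + 1) * a * (A * B))"
    using \<open>A * B \<le> T * (B + 2 * a * S)\<close> pos by (intro divide_right_mono) auto
  also have "\<dots> = T / real (p + 1) * (1 / (a * A) + 2 * S / (A * B))"
    using pos by (simp add: field_simps)
  finally show ?thesis
    unfolding AB A_def[symmetric] a_def[symmetric] T_def[symmetric] S_def[symmetric] .
qed

lemma nat_mult_Suc_mult_two_power_le: "real p * real (p + 1) * 2 ^ (p - 1) \<le> (8::real) ^ p"
proof -
  have "p < 2 ^ p" by (rule less_exp)
  then have "real p \<le> 2 ^ p" "real (p + 1) \<le> 2 ^ p"
    by (metis less_imp_le of_nat_le_iff of_nat_numeral of_nat_power, metis Suc_eq_plus1 Suc_leI of_nat_le_iff of_nat_numeral of_nat_power)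
  moreover have "(2::real) ^ (p - 1) \<le> 2 ^ p" by (rule power_increasing) auto
  ultimately have "real p * real (p + 1) * 2 ^ (p - 1) \<le> 2 ^ p * 2 ^ p * 2 ^ p"
    by (intro mult_mono) auto
  also have "\<dots> = (8::real) ^ p" by (simp add: power_mult_distrib[symmetric])
  finally show ?thesis .
qed

lemma interp_error_terms_le:
  fixes K H C :: real and p :: nat
  assumes C: "1 / (real (p + 1) * 2 ^ (p - 1)) \<le> C"
    and K: "K \<ge> 0" and H: "H \<ge> 0" and p: "p \<ge> 2"
  shows "(K * H\<^sup>2 / 8) ^ p + 2 * K ^ p * (H / 2) ^ p / real (p + 1)
    \<le> C * (H ^ p + H ^ (2 * p) / real p) * K ^ p"
proof -
  have two_power: "(2::real) ^ p = 2 * 2 ^ (p - 1)"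
    using p by (metis Suc_diff_1 le_trans one_le_numeral power_Suc zero_less_one less_le_trans)
  have "1 / 8 ^ p \<le> 1 / (real p * (real (p + 1) * 2 ^ (p - 1)))"
    using nat_mult_Suc_mult_two_power_le[of p] p by (intro divide_left_mono) (auto simp: mult.assoc)
  also have "\<dots> = (1 / (real (p + 1) * 2 ^ (p - 1))) / real p"
    by simp
  also have "\<dots> \<le> C / real p"
    using C by (rule divide_right_mono) simp
  finally have "K ^ p * H ^ (2 * p) * (1 / 8 ^ p) \<le> K ^ p * H ^ (2 * p) * (C / real p)"
    using K H by (intro mult_left_mono) auto
  moreover have "(K * H\<^sup>2 / 8) ^ p = K ^ p * H ^ (2 * p) * (1 / 8 ^ p)"
    by (simp add: power_mult_distrib power_divide power_mult[symmetric] mult.commute)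
  moreover have "K ^ p * H ^ p * (1 / (real (p + 1) * 2 ^ (p - 1))) \<le> K ^ p * H ^ p * C"
    using K H C by (intro mult_left_mono) auto
  moreover have "2 * K ^ p * (H / 2) ^ p / real (p + 1) = K ^ p * H ^ p * (1 / (real (p + 1) * 2 ^ (p - 1)))"
    by (simp add: two_power power_divide field_simps)
  ultimately show ?thesis by (simp add: algebra_simps)
qed

theorem theorem2p4:
  fixes p n N :: nat and u u' u'' uI :: "real \<Rightarrow> real" and x :: "nat \<Rightarrow> real"
    and m2 M2 :: real
  assumes p: "p \<ge> 2" and n: "n \<ge> 1"
    and u': "\<forall>t\<in>{0..1}. (u has_real_derivative u' t) (at t within {0..1})"
    and u'': "\<forall>t\<in>{0..1}. (u' has_real_derivative u'' t) (at t within {0..1})"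
    and u''_cont: "continuous_on {0..1} u''"
    and bounds: "\<forall>t\<in>{0..1}. m2 \<le> u'' t \<and> u'' t \<le> M2"
    and x0: "x 0 = 0" and xN: "x (N + 1) = 1"
    and xmono: "\<forall>i\<le>N. x i < x (Suc i)"
    and uI_cont: "continuous_on {0..1} uI"
    and uI_affine: "\<forall>i\<le>N. \<exists>a b. \<forall>t\<in>{x i..x (Suc i)}. uI t = a * t + b"
    and uI_nodes: "\<forall>i\<le>N + 1. uI (x i) = u (x i)"
  defines "h \<equiv> Max ((\<lambda>i. x (Suc i) - x i) ` {0..N})"
    and "u''_sup \<equiv> (SUP t\<in>{0..1}. \<bar>u'' t\<bar>)"
  shows "norm_1p (real p) (\<lambda>t. u t - uI t) powr (real p) \<le>
    real (n + 2) ^ (p - 1) / real (p + 1)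
      * (1 / (2 ^ (p - 1) * real n ^ p) + 2 * S_star p n / real n ^ (2 * p + 1))
      * (h ^ p + h ^ (2 * p) / real p) * u''_sup ^ p
    + 1 / (3 * real n) * (3 / 8) ^ p * (h ^ p + h ^ (2 * p) / real p) * (M2 - m2) ^ p"
proof -
  interpret p1_interpolant u u' u'' x N uI
    by unfold_locales (use u' u'' u''_cont x0 xN xmono uI_cont uI_affine uI_nodes in auto)
  have h: "h = mesh" and sup: "u''_sup = u''_sup_norm"
    by (simp_all add: h_def mesh_def u''_sup_def u''_sup_norm_def)
  have "m2 \<le> M2" using bounds by force
  then have remainder_nonneg:
    "0 \<le> 1 / (3 * real n) * (3 / 8) ^ p * (h ^ p + h ^ (2 * p) / real p) * (M2 - m2) ^ p"
    using mesh_pos unfolding h by (intro mult_nonneg_nonneg) auto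
  have "norm_1p (real p) (\<lambda>t. u t - uI t) powr (real p)
      \<le> (u''_sup * h\<^sup>2 / 8) ^ p + 2 * u''_sup ^ p * (h / 2) ^ p / real (p + 1)"
    using norm_1p_interp_error_powr_le p unfolding h sup by simp
  also have "\<dots> \<le> real (n + 2) ^ (p - 1) / real (p + 1)
      * (1 / (2 ^ (p - 1) * real n ^ p) + 2 * S_star p n / real n ^ (2 * p + 1))
      * (h ^ p + h ^ (2 * p) / real p) * u''_sup ^ p"
    using S_star_constant_ge[OF p n] u''_sup_norm_nonneg mesh_pos p unfolding h sup
    by (intro interp_error_terms_le) auto
  finally show ?thesis using remainder_nonneg by linarith
qed

end
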